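(* Let $G$ be a weakly-reversible chemical reaction network in $s$ species that is not catalytic. Then $V_{\mathbb{R}}(\mathcal{E}_G)\cap\mathbb{R}^s_{>0}$ is dense, in the Euclidean topology, in $V_{\mathbb{R}}(\mathcal{E}_G)\cap\mathbb{R}^s_{\ge0}$.
   Context: A chemical reaction network (CRN) consists of positive integers $s,n$, a finite directed graph $G$ with vertex set $\{1,\dots,n\}$ and edge set $E(G)$, and an injective labeling of vertex $i$ by a monic monomial $\psi_i=\prod_{j=1}^s x_j^{y_{ij}}$. $G$ is weakly-reversible iff each connected component is strongly connected. The associated event-system $\mathcal{E}_G$ is the set of binomials $\psi_i-\psi_j$, one for each pair $\{i,j\}$ with $(i,j)\in E(G)$ or $(j,i)\in E(G)$; $V_{\mathbb{R}}(\mathcal{E}_G)$ is its real zero set in $\mathbb{R}^s$. The event-graph $\overline{G}$ has as vertices all monic monomials in $x_1,\dots,x_s$, with an edge $(N\psi_i,N\psi_j)$ for each $(i,j)\in E(G)$ and each monic monomial $N$. A weakly-reversible CRN is catalytic iff there exist monic monomials $M,N$ path-connected in $\overline{G}$ such that $M/\gcd(M,N)$ and $N/\gcd(M,N)$ are not path-connected in $\overline{G}$. *)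

theory Defs
  imports "HOL-Analysis.Analysis"
begin

(* Species are indexed by a finite type 's (so s = CARD('s) >= 1).
   A monic monomial x^a is represented by its exponent vector a :: 's => nat.
   A CRN is given by n :: nat, an edge set E on vertices {1..n}, and a
   labeling y :: nat => ('s => nat) (vertex i is labelled by x^(y i)). *)

definition is_CRN :: "nat \<Rightarrow> (nat \<times> nat) set \<Rightarrow> (nat \<Rightarrow> ('s \<Rightarrow> nat)) \<Rightarrow> bool" where
  "is_CRN n E y \<longleftrightarrow> n \<ge> 1 \<and> E \<subseteq> {1..n} \<times> {1..n} \<and> inj_on y {1..n}"

definition weakly_reversible :: "nat \<Rightarrow> (nat \<times> nat) set \<Rightarrow> bool" where
  "weakly_reversible n E \<longleftrightarrow>
     (\<forall>i\<in>{1..n}. \<forall>j\<in>{1..n}. (i, j) \<in> (E \<union> E\<inverse>)\<^sup>* \<longrightarrow> (i, j) \<in> E\<^sup>*)"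

definition monom_eval :: "('s::finite \<Rightarrow> nat) \<Rightarrow> real ^ 's \<Rightarrow> real" where
  "monom_eval a x = (\<Prod>k\<in>UNIV. (x $ k) ^ a k)"

definition event_variety :: "(nat \<times> nat) set \<Rightarrow> (nat \<Rightarrow> ('s::finite \<Rightarrow> nat)) \<Rightarrow> (real ^ 's) set" where
  "event_variety E y = {x. \<forall>(i, j)\<in>E. monom_eval (y i) x - monom_eval (y j) x = 0}"

(* edges of the event graph: (N * psi_i, N * psi_j) for (i,j) in E and every monic monomial N *)
definition event_edges :: "(nat \<times> nat) set \<Rightarrow> (nat \<Rightarrow> ('s \<Rightarrow> nat)) \<Rightarrow> (('s \<Rightarrow> nat) \<times> ('s \<Rightarrow> nat)) set" where
  "event_edges E y = {(\<lambda>k. N k + y i k, \<lambda>k. N k + y j k) | N i j. (i, j) \<in> E}"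

definition event_connected :: "(nat \<times> nat) set \<Rightarrow> (nat \<Rightarrow> ('s \<Rightarrow> nat)) \<Rightarrow> ('s \<Rightarrow> nat) \<Rightarrow> ('s \<Rightarrow> nat) \<Rightarrow> bool" where
  "event_connected E y M N \<longleftrightarrow> (M, N) \<in> (event_edges E y \<union> (event_edges E y)\<inverse>)\<^sup>*"

(* M / gcd(M,N) on exponent vectors *)
definition monom_quot_gcd :: "('s \<Rightarrow> nat) \<Rightarrow> ('s \<Rightarrow> nat) \<Rightarrow> ('s \<Rightarrow> nat)" where
  "monom_quot_gcd M N = (\<lambda>k. M k - min (M k) (N k))"

definition catalytic :: "nat \<Rightarrow> (nat \<times> nat) set \<Rightarrow> (nat \<Rightarrow> ('s \<Rightarrow> nat)) \<Rightarrow> bool" where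
  "catalytic n E y \<longleftrightarrow> weakly_reversible n E \<and>
     (\<exists>M N. event_connected E y M N \<and>
        \<not> event_connected E y (monom_quot_gcd M N) (monom_quot_gcd N M))"

end

theory Submission
  imports Defs
begin

text \<open>Connected monomials take the same value on the event variety. Since the network is not
  catalytic, common factors can be cancelled, so for every integer combination \<open>u\<close> of reaction
  vectors the monomials \<open>x^(u\<^sup>+)\<close> and \<open>x^(u\<^sup>-)\<close> agree on the variety. At a nonnegative point \<open>x\<close>
  with zero set \<open>Z\<close> this forces every vector of the stoichiometric subspace that is nonnegative
  on \<open>Z\<close> to vanish on \<open>Z\<close> and to be orthogonal to \<open>log x\<close> (first for integer, then rational
  and, by density, real vectors). Gordan's alternative then yields \<open>c\<close>, orthogonal to all reaction
  vectors, positive on \<open>Z\<close> and zero elsewhere, and there is \<open>w\<close>, orthogonal to all reaction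
  vectors, agreeing with \<open>log x\<close> off \<open>Z\<close>. The positive points \<open>exp (w - t c)\<close> of the variety
  converge to \<open>x\<close> as \<open>t \<rightarrow> \<infinity>\<close>.\<close>

lemma event_connected_refl: "event_connected E y M M"
  by (simp add: event_connected_def)

lemma event_connected_sym: "event_connected E y M N \<Longrightarrow> event_connected E y N M"
  unfolding event_connected_def
  by (metis converse_Un converse_converse rtrancl_converseI sup_commute)

lemma event_connected_trans [trans]:
  "event_connected E y M N \<Longrightarrow> event_connected E y N P \<Longrightarrow> event_connected E y M P"
  unfolding event_connected_def by (rule rtrancl_trans)

lemma event_edges_shift:
  assumes "(M, N) \<in> event_edges E y"
  shows "((\<lambda>k. M k + A k), (\<lambda>k. N k + A k)) \<in> event_edges E y"
proof -
  from assms obtain B i j where "M = (\<lambda>k. B k + y i k)" "N = (\<lambda>k. B k + y j k)" "(i, j) \<in> E"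
    unfolding event_edges_def by blast
  then show ?thesis
    unfolding event_edges_def
    by (intro CollectI exI[of _ "\<lambda>k. B k + A k"] exI[of _ i] exI[of _ j]) (auto simp: algebra_simps)
qed

lemma event_connected_shift:
  assumes "event_connected E y M N"
  shows "event_connected E y (\<lambda>k. M k + A k) (\<lambda>k. N k + A k)"
  using assms unfolding event_connected_def
proof (induction rule: rtrancl_induct)
  case (step N P)
  then have "((\<lambda>k. N k + A k), (\<lambda>k. P k + A k)) \<in> event_edges E y \<union> (event_edges E y)\<inverse>"
    using event_edges_shift by blast
  with step.IH show ?case by (rule rtrancl_into_rtrancl)
qed simp

lemma event_connected_monom_eval_eq:
  assumes "event_connected E y M N" and "x \<in> event_variety E y"
  shows "monom_eval M x = monom_eval N x"
proof -
  have edge: "monom_eval M x = monom_eval N x" if "(M, N) \<in> event_edges E y" for M N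
  proof -
    from that obtain B i j where e: "M = (\<lambda>k. B k + y i k)" "N = (\<lambda>k. B k + y j k)" "(i, j) \<in> E"
      unfolding event_edges_def by blast
    have "monom_eval (y i) x = monom_eval (y j) x"
      using assms(2) e(3) unfolding event_variety_def by auto
    then show ?thesis unfolding e monom_eval_def by (simp add: power_add prod.distrib)
  qed
  show ?thesis using assms(1) unfolding event_connected_def
  proof (induction rule: rtrancl_induct)
    case (step N P)
    then show ?case using edge[of N P] edge[of P N] by auto
  qed simp
qed

text \<open>Unlike \<open>event_connected\<close>, this relation is closed under adding exponent vectors
  (\<open>stably_connected_add\<close>), so it reaches all integer combinations of reaction vectors.\<close>

definition stably_connected ::
    "(nat \<times> nat) set \<Rightarrow> (nat \<Rightarrow> ('s \<Rightarrow> nat)) \<Rightarrow> ('s \<Rightarrow> nat) \<Rightarrow> ('s \<Rightarrow> nat) \<Rightarrow> bool" where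
  "stably_connected E y P Q \<longleftrightarrow> (\<exists>W. event_connected E y (\<lambda>k. P k + W k) (\<lambda>k. Q k + W k))"

lemma stably_connected_refl: "stably_connected E y P P"
  unfolding stably_connected_def using event_connected_refl by blast

lemma stably_connected_sym: "stably_connected E y P Q \<Longrightarrow> stably_connected E y Q P"
  unfolding stably_connected_def using event_connected_sym by blast

lemma stably_connected_add:
  assumes "stably_connected E y P Q" and "stably_connected E y P' Q'"
  shows "stably_connected E y (\<lambda>k. P k + P' k) (\<lambda>k. Q k + Q' k)"
proof -
  obtain W where W: "event_connected E y (\<lambda>k. P k + W k) (\<lambda>k. Q k + W k)"
    using assms(1) stably_connected_def by blast
  obtain W' where W': "event_connected E y (\<lambda>k. P' k + W' k) (\<lambda>k. Q' k + W' k)"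
    using assms(2) stably_connected_def by blast
  have "event_connected E y (\<lambda>k. (P k + P' k) + (W k + W' k)) (\<lambda>k. (Q k + P' k) + (W k + W' k))"
    using event_connected_shift[OF W, of "\<lambda>k. P' k + W' k"] by (simp add: algebra_simps)
  also have "event_connected E y \<dots> (\<lambda>k. (Q k + Q' k) + (W k + W' k))"
    using event_connected_shift[OF W', of "\<lambda>k. Q k + W k"] by (simp add: algebra_simps)
  finally show ?thesis unfolding stably_connected_def by (intro exI[of _ "\<lambda>k. W k + W' k"])
qed

lemma stably_connected_edge:
  assumes "(i, j) \<in> E"
  shows "stably_connected E y (y i) (y j)"
proof -
  have "(y i, y j) \<in> event_edges E y"
    unfolding event_edges_def using assms
    by (intro CollectI exI[of _ "\<lambda>k. 0"] exI[of _ i] exI[of _ j]) auto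
  then have "event_connected E y (y i) (y j)" unfolding event_connected_def by blast
  then show ?thesis unfolding stably_connected_def by (intro exI[of _ "\<lambda>k. 0"]) simp
qed

lemma stably_connected_edge_multiple:
  assumes "(i, j) \<in> E"
  shows "stably_connected E y (\<lambda>k. m * y i k) (\<lambda>k. m * y j k)"
proof (induction m)
  case 0
  then show ?case using stably_connected_refl[of E y "\<lambda>k. 0"] by simp
next
  case (Suc m)
  then show ?case
    using stably_connected_add[OF Suc stably_connected_edge[OF assms]] by (simp add: algebra_simps)
qed

definition reaction_diff :: "(nat \<Rightarrow> ('s \<Rightarrow> nat)) \<Rightarrow> nat \<times> nat \<Rightarrow> 's \<Rightarrow> int" where
  "reaction_diff y e k = int (y (fst e) k) - int (y (snd e) k)"

lemma stably_connected_integer_combination: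
  assumes "finite F" and "F \<subseteq> E"
  shows "\<exists>P Q. stably_connected E y P Q \<and>
           (\<forall>k. (\<Sum>e\<in>F. c e * reaction_diff y e k) = int (P k) - int (Q k))"
  using assms
proof (induction F rule: finite_induct)
  case empty
  then show ?case using stably_connected_refl by fastforce
next
  case (insert e F)
  then obtain P Q where PQ: "stably_connected E y P Q"
      "\<forall>k. (\<Sum>e\<in>F. c e * reaction_diff y e k) = int (P k) - int (Q k)"
    by auto
  obtain i j where e: "e = (i, j)" by force
  with insert have "(i, j) \<in> E" by auto
  note edge = stably_connected_edge_multiple[OF this]
  show ?case
  proof (cases "c e \<ge> 0")
    case True
    have "stably_connected E y (\<lambda>k. P k + nat (c e) * y i k) (\<lambda>k. Q k + nat (c e) * y j k)"
      using stably_connected_add[OF PQ(1) edge] .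
    then show ?thesis using PQ(2) insert True e by (force simp: reaction_diff_def algebra_simps)
  next
    case False
    have "stably_connected E y (\<lambda>k. P k + nat (- c e) * y j k) (\<lambda>k. Q k + nat (- c e) * y i k)"
      using stably_connected_add[OF PQ(1) stably_connected_sym[OF edge]] .
    then show ?thesis using PQ(2) insert False e by (force simp: reaction_diff_def algebra_simps)
  qed
qed

definition gcd_cancellative :: "(nat \<times> nat) set \<Rightarrow> (nat \<Rightarrow> ('s \<Rightarrow> nat)) \<Rightarrow> bool" where
  "gcd_cancellative E y \<longleftrightarrow> (\<forall>M N. event_connected E y M N \<longrightarrow>
      event_connected E y (monom_quot_gcd M N) (monom_quot_gcd N M))"

lemma gcd_cancellative_integer_combination_connected:
  assumes "gcd_cancellative E y" and "finite E"
    and u: "\<And>k. u k = (\<Sum>e\<in>E. c e * reaction_diff y e k)"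
  shows "event_connected E y (\<lambda>k. nat (u k)) (\<lambda>k. nat (- u k))"
proof -
  obtain P Q W where PQ: "\<forall>k. u k = int (P k) - int (Q k)"
    and W: "event_connected E y (\<lambda>k. P k + W k) (\<lambda>k. Q k + W k)"
    using stably_connected_integer_combination[OF assms(2) subset_refl, of y c]
    unfolding stably_connected_def u[symmetric] by blast
  have "monom_quot_gcd (\<lambda>k. P k + W k) (\<lambda>k. Q k + W k) = (\<lambda>k. nat (u k))"
    and "monom_quot_gcd (\<lambda>k. Q k + W k) (\<lambda>k. P k + W k) = (\<lambda>k. nat (- u k))"
    unfolding monom_quot_gcd_def using PQ by (auto simp: fun_eq_iff)
  then show ?thesis using assms(1) W unfolding gcd_cancellative_def by metis
qed

lemma monom_eval_eq_exp_sum_ln: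
  fixes x :: "real ^ 's::finite"
  assumes "\<forall>k. x $ k \<ge> 0" and "\<forall>k. x $ k = 0 \<longrightarrow> a k = 0"
  shows "monom_eval a x = exp (\<Sum>k\<in>UNIV. real (a k) * ln (x $ k))"
  unfolding monom_eval_def exp_sum[OF finite]
proof (rule prod.cong[OF refl])
  fix k
  show "x $ k ^ a k = exp (real (a k) * ln (x $ k))"
  proof (cases "x $ k = 0")
    case False
    with assms(1) have "x $ k > 0" by (simp add: order_less_le)
    then show ?thesis by (metis exp_ln exp_of_nat_mult)
  qed (use assms(2) in simp)
qed

definition reaction_vector :: "(nat \<Rightarrow> ('s::finite \<Rightarrow> nat)) \<Rightarrow> nat \<times> nat \<Rightarrow> real ^ 's" where
  "reaction_vector y e = (\<chi> k. of_int (reaction_diff y e k))"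

definition rational_span :: "(nat \<times> nat) set \<Rightarrow> (nat \<Rightarrow> ('s::finite \<Rightarrow> nat)) \<Rightarrow> (real ^ 's) set" where
  "rational_span E y = {(\<Sum>e\<in>E. q e *\<^sub>R reaction_vector y e) | q. \<forall>e\<in>E. q e \<in> \<rat>}"

lemma rational_span_component_Rats: "u \<in> rational_span E y \<Longrightarrow> u $ k \<in> \<rat>"
  unfolding rational_span_def reaction_vector_def by (auto intro!: Rats_sum)

lemma rational_span_diff_scaleR:
  assumes "u \<in> rational_span E y" and "w \<in> rational_span E y" and "r \<in> \<rat>"
  shows "u - r *\<^sub>R w \<in> rational_span E y"
proof -
  obtain q where q: "u = (\<Sum>e\<in>E. q e *\<^sub>R reaction_vector y e)" "\<forall>e\<in>E. q e \<in> \<rat>"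
    using assms(1) rational_span_def by blast
  obtain p where p: "w = (\<Sum>e\<in>E. p e *\<^sub>R reaction_vector y e)" "\<forall>e\<in>E. p e \<in> \<rat>"
    using assms(2) rational_span_def by blast
  have "u - r *\<^sub>R w = (\<Sum>e\<in>E. (q e - r * p e) *\<^sub>R reaction_vector y e)"
    unfolding q p by (simp add: scaleR_sum_right sum_subtractf[symmetric] algebra_simps)
  moreover have "\<forall>e\<in>E. q e - r * p e \<in> \<rat>" using q p assms(3) by simp
  ultimately show ?thesis
    unfolding rational_span_def by (intro CollectI exI[of _ "\<lambda>e. q e - r * p e"]) simp
qed

lemma Rats_common_denominator:
  assumes "finite F" and "\<forall>e\<in>F. q e \<in> \<rat>"
  shows "\<exists>m::nat. m > 0 \<and> (\<forall>e\<in>F. real m * q e \<in> \<int>)"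
  using assms
proof (induction F rule: finite_induct)
  case empty
  then show ?case by (intro exI[of _ 1]) simp
next
  case (insert e F)
  then obtain m where m: "m > 0" "\<forall>e\<in>F. real m * q e \<in> \<int>" by auto
  from insert have "q e \<in> \<rat>" by simp
  then obtain a b where ab: "b > 0" "q e = of_int a / of_int b" using Rats_cases' by metis
  have "real (m * nat b) * q e = of_int (int m * a)" using ab by simp
  moreover have "real (m * nat b) * q e' \<in> \<int>" if "e' \<in> F" for e'
  proof -
    have "real (m * nat b) * q e' = of_int b * (real m * q e')" using ab by simp
    then show ?thesis using m(2) that by (metis Ints_mult Ints_of_int)
  qed
  ultimately show ?case using m ab by (intro exI[of _ "m * nat b"]) auto
qed

lemma span_image_sum_repr:
  fixes f :: "'a \<Rightarrow> 'b::real_vector"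
  assumes "finite S" and "v \<in> span (f ` S)"
  shows "\<exists>c. v = (\<Sum>x\<in>S. c x *\<^sub>R f x)"
  using assms(2)
proof (induction rule: span_induct_alt)
  case base
  show ?case by (intro exI[of _ "\<lambda>_. 0"]) simp
next
  case (step a z w)
  then obtain x0 c where x0: "x0 \<in> S" "z = f x0" and c: "w = (\<Sum>x\<in>S. c x *\<^sub>R f x)" by blast
  have "a *\<^sub>R z + w = (\<Sum>x\<in>S. (c x + (if x = x0 then a else 0)) *\<^sub>R f x)"
    using assms(1) x0 c by (simp add: scaleR_add_left sum.distrib if_distrib[of "\<lambda>t. t *\<^sub>R _"] cong: if_cong)
  then show ?case by (intro exI[of _ "\<lambda>x. c x + (if x = x0 then a else 0)"])
qed

lemma rational_span_dense:
  assumes "finite E" and "v \<in> span (reaction_vector y ` E)" and "\<epsilon> > 0"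
  shows "\<exists>u\<in>rational_span E y. norm (u - v) < \<epsilon>"
proof -
  obtain c where v: "v = (\<Sum>e\<in>E. c e *\<^sub>R reaction_vector y e)"
    using span_image_sum_repr[OF assms(1,2)] by blast
  define B where "B = (\<Sum>e\<in>E. norm (reaction_vector y e)) + 1"
  have B: "B > 0" unfolding B_def by (simp add: add_nonneg_pos sum_nonneg)
  define \<delta> where "\<delta> = \<epsilon> / B"
  have \<delta>: "\<delta> > 0" unfolding \<delta>_def using assms(3) B by simp
  have "\<forall>e. \<exists>r\<in>\<rat>. c e < r \<and> r < c e + \<delta>"
    using Rats_dense_in_real \<delta> by (metis less_add_same_cancel1)
  then obtain q where q: "\<And>e. q e \<in> \<rat>" "\<And>e. c e < q e" "\<And>e. q e < c e + \<delta>"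
    by metis
  let ?u = "\<Sum>e\<in>E. q e *\<^sub>R reaction_vector y e"
  have "?u \<in> rational_span E y" unfolding rational_span_def using q(1) by blast
  have "norm (?u - v) = norm (\<Sum>e\<in>E. (q e - c e) *\<^sub>R reaction_vector y e)"
    unfolding v by (simp add: sum_subtractf[symmetric] scaleR_diff_left)
  also have "\<dots> \<le> (\<Sum>e\<in>E. \<bar>q e - c e\<bar> * norm (reaction_vector y e))"
    using norm_sum[of "\<lambda>e. (q e - c e) *\<^sub>R reaction_vector y e" E] by simp
  also have "\<dots> \<le> (\<Sum>e\<in>E. \<delta> * norm (reaction_vector y e))"
  proof (intro sum_mono mult_right_mono)
    fix e
    show "\<bar>q e - c e\<bar> \<le> \<delta>" using q(2,3)[of e] by linarith
  qed simp
  also have "\<dots> < \<delta> * B" unfolding B_def using \<delta> by (simp add: sum_distrib_left distrib_left)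
  also have "\<dots> = \<epsilon>" unfolding \<delta>_def using B by simp
  finally have "norm (?u - v) < \<epsilon>" .
  with \<open>?u \<in> rational_span E y\<close> show ?thesis by blast
qed

lemma rational_span_dense_vanishing:
  fixes Z :: "'s::finite set"
  assumes "finite E" and "v \<in> span (reaction_vector y ` E)"
    and "\<forall>k\<in>Z. v $ k = 0" and "\<epsilon> > 0"
  shows "\<exists>u\<in>rational_span E y. (\<forall>k\<in>Z. u $ k = 0) \<and> norm (u - v) < \<epsilon>"
  using finite[of Z] assms(3,4)
proof (induction Z arbitrary: \<epsilon> rule: finite_induct)
  case empty
  then show ?case using rational_span_dense[OF assms(1,2)] by simp
next
  case (insert k Z)
  have approx: "\<exists>u\<in>rational_span E y. (\<forall>j\<in>Z. u $ j = 0) \<and> norm (u - v) < \<delta>" if "\<delta> > 0" for \<delta>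
    using insert.IH[OF _ that] insert.prems(1) by simp
  text \<open>Approximate inside \<open>Z\<close> and then clear coordinate \<open>k\<close> with a rational multiple of a
    rational vector that vanishes on \<open>Z\<close> but not at \<open>k\<close>; if there is none, coordinate \<open>k\<close>
    is already zero.\<close>
  show ?case
  proof (cases "\<exists>u0\<in>rational_span E y. (\<forall>j\<in>Z. u0 $ j = 0) \<and> u0 $ k \<noteq> 0")
    case False
    with approx[OF insert.prems(2)] show ?thesis by auto
  next
    case True
    then obtain u0 where u0: "u0 \<in> rational_span E y" "\<forall>j\<in>Z. u0 $ j = 0" "u0 $ k \<noteq> 0"
      by blast
    define K where "K = 1 + norm u0 / \<bar>u0 $ k\<bar>"
    have K: "K > 0" unfolding K_def by (simp add: add_pos_nonneg)
    obtain w where w: "w \<in> rational_span E y" "\<forall>j\<in>Z. w $ j = 0" "norm (w - v) < \<epsilon> / K"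
      using approx insert.prems(2) K by (meson divide_pos_pos)
    define r where "r = w $ k / u0 $ k"
    have "r \<in> \<rat>"
      unfolding r_def using rational_span_component_Rats[OF w(1)] rational_span_component_Rats[OF u0(1)] by simp
    then have in_span: "w - r *\<^sub>R u0 \<in> rational_span E y"
      using rational_span_diff_scaleR w(1) u0(1) by blast
    have vanishing: "\<forall>j\<in>insert k Z. (w - r *\<^sub>R u0) $ j = 0"
      unfolding r_def using w(2) u0(2,3) by simp
    have wk: "\<bar>w $ k\<bar> \<le> norm (w - v)"
      using component_le_norm_cart[of "w - v" k] insert.prems(1) by simp
    have "norm ((w - r *\<^sub>R u0) - v) = norm ((w - v) - r *\<^sub>R u0)" by (simp add: algebra_simps)
    also have "\<dots> \<le> norm (w - v) + \<bar>r\<bar> * norm u0"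
      using norm_triangle_ineq4[of "w - v" "r *\<^sub>R u0"] by simp
    also have "\<dots> \<le> norm (w - v) + norm (w - v) / \<bar>u0 $ k\<bar> * norm u0"
      unfolding r_def abs_divide using wk by (intro add_left_mono mult_right_mono divide_right_mono) simp_all
    also have "\<dots> = norm (w - v) * K" unfolding K_def by (simp add: algebra_simps)
    also have "\<dots> < \<epsilon>" using w(3) K by (simp add: pos_less_divide_eq)
    finally show ?thesis using in_span vanishing by blast
  qed
qed

lemma span_axis_vanishes:
  assumes "v \<in> span ((\<lambda>k. axis k (1::real)) ` B)" and "k \<notin> B"
  shows "v $ k = 0"
proof -
  have "span ((\<lambda>k. axis k (1::real)) ` B) \<subseteq> {w. \<forall>k\<in>-B. w $ k = 0}"
    by (rule span_minimal) (auto simp: axis_def subspace_def)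
  then show ?thesis using assms by auto
qed

lemma convex_hull_axes_simplex:
  fixes Z :: "'n::finite set"
  assumes "p \<in> convex hull ((\<lambda>k. axis k (1::real)) ` Z)"
  shows "(\<forall>k. p $ k \<ge> 0) \<and> (\<Sum>k\<in>Z. p $ k) = 1"
proof -
  define S where "S = {p :: real ^ 'n. (\<forall>k. p $ k \<ge> 0) \<and> (\<Sum>k\<in>Z. p $ k) = 1}"
  have "convex S"
  proof (rule convexI)
    fix p q :: "real ^ 'n" and u v :: real
    assume "p \<in> S" "q \<in> S" "0 \<le> u" "0 \<le> v" "u + v = 1"
    then show "u *\<^sub>R p + v *\<^sub>R q \<in> S"
      unfolding S_def by (simp add: sum.distrib sum_distrib_left[symmetric])
  qed
  have "(\<lambda>k. axis k (1::real)) ` Z \<subseteq> S"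
    unfolding S_def by (auto simp: axis_def)
  then have "convex hull ((\<lambda>k. axis k (1::real)) ` Z) \<subseteq> S"
    using \<open>convex S\<close> by (rule hull_minimal)
  with assms show ?thesis unfolding S_def by blast
qed

lemma subspace_bounded_below_functional:
  assumes "subspace H" and "\<forall>h\<in>H. inner a h > b"
  shows "b < 0 \<and> (\<forall>h\<in>H. inner a h = 0)"
proof -
  have "inner a h = 0" if h: "h \<in> H" for h
  proof (rule ccontr)
    assume ne: "inner a h \<noteq> 0"
    have "((b - 1) / inner a h) *\<^sub>R h \<in> H" using subspace_scale[OF assms(1) h] .
    then have "inner a (((b - 1) / inner a h) *\<^sub>R h) > b" using assms(2) by blast
    then show False using ne by simp
  qed
  moreover have "inner a 0 > b" using assms(2) subspace_0[OF assms(1)] by blast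
  ultimately show ?thesis by simp
qed

lemma in_span_if_orthogonal_to_annihilator:
  fixes z :: "'a::euclidean_space"
  assumes "\<And>w. \<forall>s\<in>S. inner w s = 0 \<Longrightarrow> inner z w = 0"
  shows "z \<in> span S"
proof -
  obtain p q where p: "p \<in> span S" and q: "\<And>w. w \<in> span S \<Longrightarrow> orthogonal q w" and "z = p + q"
    using orthogonal_subspace_decomp_exists by blast
  have "\<forall>s\<in>S. inner q s = 0" using q by (simp add: orthogonal_def span_base)
  then have "inner z q = 0" by (rule assms)
  moreover have "inner p q = 0" using q[OF p] by (simp add: orthogonal_def inner_commute)
  ultimately have "inner q q = 0" using \<open>z = p + q\<close> by (simp add: inner_add_left)
  then show ?thesis using p \<open>z = p + q\<close> by simp
qed

lemma monom_eval_exp_vector: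
  "monom_eval a (\<chi> k. exp (w $ k)) = exp (\<Sum>k\<in>UNIV. real (a k) * w $ k)"
  unfolding monom_eval_def exp_sum[OF finite]
  by (rule prod.cong[OF refl]) (simp add: exp_of_nat_mult)

lemma exp_vector_in_event_variety:
  fixes w :: "real ^ 's::finite"
  assumes "\<forall>e\<in>E. inner w (reaction_vector y e) = 0"
  shows "(\<chi> k. exp (w $ k)) \<in> event_variety E y"
  unfolding event_variety_def
proof (clarify)
  fix i j
  assume "(i, j) \<in> E"
  with assms have "(\<Sum>k\<in>UNIV. w $ k * (real (y i k) - real (y j k))) = 0"
    by (auto simp: inner_vec_def reaction_vector_def reaction_diff_def)
  then have "(\<Sum>k\<in>UNIV. real (y i k) * w $ k) = (\<Sum>k\<in>UNIV. real (y j k) * w $ k)"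
    by (simp add: algebra_simps sum_subtractf)
  then show "monom_eval (y i) (\<chi> k. exp (w $ k)) - monom_eval (y j) (\<chi> k. exp (w $ k)) = 0"
    by (simp add: monom_eval_exp_vector)
qed

lemma exp_minus_linear_tendsto_zero:
  assumes "(c::real) > 0"
  shows "(\<lambda>n. exp (w - real n * c)) \<longlonglongrightarrow> 0"
proof -
  have "exp (w - real n * c) = exp w * inverse (exp c) ^ n" for n
    by (simp add: exp_diff exp_of_nat_mult power_inverse divide_inverse)
  moreover have "(\<lambda>n. exp w * inverse (exp c) ^ n) \<longlonglongrightarrow> exp w * 0"
    using assms by (intro tendsto_mult tendsto_const LIMSEQ_power_zero) (simp_all add: inverse_less_1_iff)
  ultimately show ?thesis by simp
qed

locale nonneg_event_point =
  fixes E :: "(nat \<times> nat) set" and y :: "nat \<Rightarrow> ('s::finite \<Rightarrow> nat)" and x :: "real ^ 's"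
  assumes finite_E: "finite E"
    and cancellative: "gcd_cancellative E y"
    and in_variety: "x \<in> event_variety E y"
    and nonneg: "\<forall>k. x $ k \<ge> 0"
begin

lemma integer_combination_log_orthogonal:
  assumes u: "\<And>k. u k = (\<Sum>e\<in>E. c e * reaction_diff y e k)"
    and u_nonneg: "\<forall>k. x $ k = 0 \<longrightarrow> u k \<ge> 0"
  shows "(\<forall>k. x $ k = 0 \<longrightarrow> u k = 0) \<and> (\<Sum>k\<in>UNIV. of_int (u k) * ln (x $ k)) = 0"
proof -
  have eq: "monom_eval (\<lambda>k. nat (u k)) x = monom_eval (\<lambda>k. nat (- u k)) x"
    using event_connected_monom_eval_eq[OF gcd_cancellative_integer_combination_connected
        [OF cancellative finite_E u] in_variety] .
  have neg: "monom_eval (\<lambda>k. nat (- u k)) x = exp (\<Sum>k\<in>UNIV. real (nat (- u k)) * ln (x $ k))"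
    using monom_eval_eq_exp_sum_ln[OF nonneg] u_nonneg by simp
  have "monom_eval (\<lambda>k. nat (u k)) x \<noteq> 0"
    using eq neg by simp
  then have "\<forall>k. x $ k ^ nat (u k) \<noteq> 0"
    unfolding monom_eval_def by simp
  then have zeros: "\<forall>k. x $ k = 0 \<longrightarrow> u k = 0"
    using u_nonneg by (metis nat_0_iff order_antisym power_0_left)
  have "monom_eval (\<lambda>k. nat (u k)) x = exp (\<Sum>k\<in>UNIV. real (nat (u k)) * ln (x $ k))"
    using monom_eval_eq_exp_sum_ln[OF nonneg] zeros by simp
  with eq neg have "(\<Sum>k\<in>UNIV. real (nat (u k)) * ln (x $ k)) = (\<Sum>k\<in>UNIV. real (nat (- u k)) * ln (x $ k))"
    by simp
  then have "(\<Sum>k\<in>UNIV. (real (nat (u k)) - real (nat (- u k))) * ln (x $ k)) = 0"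
    by (simp add: left_diff_distrib sum_subtractf)
  moreover have "real (nat (u k)) - real (nat (- u k)) = of_int (u k)" for k by simp
  ultimately show ?thesis using zeros by simp
qed

lemma rational_span_log_orthogonal:
  assumes "u \<in> rational_span E y" and u_nonneg: "\<forall>k. x $ k = 0 \<longrightarrow> u $ k \<ge> 0"
  shows "(\<forall>k. x $ k = 0 \<longrightarrow> u $ k = 0) \<and> inner (\<chi> k. ln (x $ k)) u = 0"
proof -
  obtain q where q: "u = (\<Sum>e\<in>E. q e *\<^sub>R reaction_vector y e)" "\<forall>e\<in>E. q e \<in> \<rat>"
    using assms(1) rational_span_def by blast
  obtain m :: nat where m: "m > 0" "\<forall>e\<in>E. real m * q e \<in> \<int>"
    using Rats_common_denominator[OF finite_E q(2)] by blast
  define c where "c e = \<lfloor>real m * q e\<rfloor>" for e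
  have c: "\<forall>e\<in>E. of_int (c e) = real m * q e"
    unfolding c_def using m(2) by (metis Ints_cases floor_of_int)
  define v where "v k = (\<Sum>e\<in>E. c e * reaction_diff y e k)" for k
  have v: "of_int (v k) = real m * u $ k" for k
  proof -
    have "of_int (v k) = (\<Sum>e\<in>E. real m * (q e * reaction_vector y e $ k))"
      unfolding v_def of_int_sum using c by (intro sum.cong) (auto simp: reaction_vector_def)
    then show ?thesis unfolding q(1) by (simp add: sum_distrib_left)
  qed
  have "\<forall>k. x $ k = 0 \<longrightarrow> v k \<ge> 0"
  proof (intro allI impI)
    fix k
    assume "x $ k = 0"
    then have "of_int (v k) \<ge> (0::real)" using u_nonneg v by simp
    then show "v k \<ge> 0" by simp
  qed
  note lattice = integer_combination_log_orthogonal[OF v_def this]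
  have zeros: "\<forall>k. x $ k = 0 \<longrightarrow> u $ k = 0"
  proof (intro allI impI)
    fix k
    assume "x $ k = 0"
    with lattice have "real m * u $ k = 0" by (simp flip: v)
    then show "u $ k = 0" using m(1) by simp
  qed
  have "real m * inner (\<chi> k. ln (x $ k)) u = 0"
    using lattice by (simp add: v inner_vec_def sum_distrib_left algebra_simps)
  with zeros m(1) show ?thesis by simp
qed

lemma span_nonneg_on_zeros_vanishes:
  assumes "v \<in> span (reaction_vector y ` E)" and v_nonneg: "\<forall>k. x $ k = 0 \<longrightarrow> v $ k \<ge> 0"
  shows "\<forall>k. x $ k = 0 \<longrightarrow> v $ k = 0"
proof (rule ccontr)
  assume "\<not> ?thesis"
  then obtain k0 where k0: "x $ k0 = 0" "v $ k0 \<noteq> 0" by blast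
  define P where "P = {k. x $ k = 0 \<and> v $ k > 0}"
  have k0P: "k0 \<in> P" unfolding P_def using k0 v_nonneg by (simp add: order_less_le)
  define \<epsilon> where "\<epsilon> = Min ((\<lambda>k. v $ k) ` P)"
  have \<epsilon>: "\<epsilon> > 0" unfolding \<epsilon>_def using k0P by (subst Min_gr_iff) (auto simp: P_def)
  obtain u where u: "u \<in> rational_span E y" "\<forall>k\<in>{k. x $ k = 0 \<and> v $ k = 0}. u $ k = 0"
      "norm (u - v) < \<epsilon>"
    using rational_span_dense_vanishing[OF finite_E assms(1) _ \<epsilon>, where Z = "{k. x $ k = 0 \<and> v $ k = 0}"]
    by auto
  have u_pos: "u $ k > 0" if "k \<in> P" for k
  proof -
    have "\<epsilon> \<le> v $ k" unfolding \<epsilon>_def using that by simp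
    moreover have "\<bar>(u - v) $ k\<bar> < \<epsilon>" using component_le_norm_cart[of "u - v" k] u(3) by linarith
    ultimately show ?thesis by simp
  qed
  have "\<forall>k. x $ k = 0 \<longrightarrow> u $ k \<ge> 0"
  proof (intro allI impI)
    fix k
    assume "x $ k = 0"
    then show "u $ k \<ge> 0"
      using u(2) u_pos[of k] v_nonneg unfolding P_def by (cases "v $ k = 0") auto
  qed
  then have "u $ k0 = 0" using rational_span_log_orthogonal[OF u(1)] k0(1) by blast
  then show False using u_pos[OF k0P] by simp
qed

lemma span_log_orthogonal:
  assumes "v \<in> span (reaction_vector y ` E)" and "\<forall>k. x $ k = 0 \<longrightarrow> v $ k = 0"
  shows "inner (\<chi> k. ln (x $ k)) v = 0"
proof (rule ccontr)
  define l where "l = (\<chi> k. ln (x $ k))"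
  assume "inner (\<chi> k. ln (x $ k)) v \<noteq> 0"
  then have lv: "\<bar>inner l v\<bar> > 0" unfolding l_def by simp
  define \<epsilon> where "\<epsilon> = \<bar>inner l v\<bar> / (norm l + 1)"
  have \<epsilon>: "\<epsilon> > 0" unfolding \<epsilon>_def using lv by (simp add: add_nonneg_pos)
  obtain u where u: "u \<in> rational_span E y" "\<forall>k\<in>{k. x $ k = 0}. u $ k = 0" "norm (u - v) < \<epsilon>"
    using rational_span_dense_vanishing[OF finite_E assms(1) _ \<epsilon>, where Z = "{k. x $ k = 0}"] assms(2)
    by auto
  have "inner l u = 0" using rational_span_log_orthogonal[OF u(1)] u(2) unfolding l_def by simp
  then have "\<bar>inner l v\<bar> = \<bar>inner l (v - u)\<bar>" by (simp add: inner_diff_right)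
  also have "\<dots> \<le> norm l * norm (v - u)" by (rule Cauchy_Schwarz_ineq2)
  also have "\<dots> \<le> norm l * \<epsilon>" using u(3) by (intro mult_left_mono) (auto simp: norm_minus_commute)
  also have "\<dots> = \<bar>inner l v\<bar> * (norm l / (norm l + 1))" unfolding \<epsilon>_def by simp
  also have "\<dots> < \<bar>inner l v\<bar>"
    using lv mult_strict_left_mono[of "norm l / (norm l + 1)" 1] by (simp add: add_nonneg_pos)
  finally show False by simp
qed

lemma span_with_support_nonneg_on_zeros_vanishes:
  assumes "h \<in> span (reaction_vector y ` E \<union> (\<lambda>k. axis k (1::real)) ` {k. x $ k \<noteq> 0})"
    and h_nonneg: "\<forall>k. x $ k = 0 \<longrightarrow> h $ k \<ge> 0"
  shows "\<forall>k. x $ k = 0 \<longrightarrow> h $ k = 0"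
proof -
  obtain a b where h: "h = a + b" and a: "a \<in> span (reaction_vector y ` E)"
    and b: "b \<in> span ((\<lambda>k. axis k (1::real)) ` {k. x $ k \<noteq> 0})"
    using assms(1) unfolding span_Un by blast
  have b_zero: "\<forall>k. x $ k = 0 \<longrightarrow> b $ k = 0" using span_axis_vanishes[OF b] by simp
  then have "\<forall>k. x $ k = 0 \<longrightarrow> a $ k \<ge> 0" using h_nonneg unfolding h by simp
  then have "\<forall>k. x $ k = 0 \<longrightarrow> a $ k = 0" by (rule span_nonneg_on_zeros_vanishes[OF a])
  with b_zero show ?thesis unfolding h by simp
qed

text \<open>Gordan's alternative: the simplex on the zero coordinates of \<open>x\<close> is separated from the
  span of the reaction vectors and the remaining coordinate axes.\<close>

lemma positive_orthogonal_direction: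
  obtains c where "\<forall>e\<in>E. inner c (reaction_vector y e) = 0" and "\<forall>k. x $ k \<noteq> 0 \<longrightarrow> c $ k = 0"
    and "\<forall>k. x $ k = 0 \<longrightarrow> c $ k > 0"
proof (cases "{k. x $ k = 0} = {}")
  case True
  then show ?thesis using that[of 0] by auto
next
  case False
  define Z where "Z = {k. x $ k = 0}"
  define H where "H = span (reaction_vector y ` E \<union> (\<lambda>k. axis k (1::real)) ` {k. x $ k \<noteq> 0})"
  define C where "C = convex hull ((\<lambda>k. axis k (1::real)) ` Z)"
  have "h \<notin> H" if "h \<in> C" for h
  proof
    assume "h \<in> H"
    from that have h: "\<forall>k. h $ k \<ge> 0" "(\<Sum>k\<in>Z. h $ k) = 1"
      using convex_hull_axes_simplex unfolding C_def by blast+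
    with \<open>h \<in> H\<close> have "\<forall>k\<in>Z. h $ k = 0"
      unfolding H_def Z_def using span_with_support_nonneg_on_zeros_vanishes by blast
    with h(2) show False by simp
  qed
  then have "C \<inter> H = {}" by blast
  moreover have "compact C" unfolding C_def by (intro compact_convex_hull finite_imp_compact) simp
  moreover have "C \<noteq> {}" unfolding C_def Z_def using False by simp
  moreover have "subspace H" unfolding H_def by simp
  ultimately obtain a b where ab: "\<forall>p\<in>C. inner a p < b" "\<forall>h\<in>H. inner a h > b"
    using separating_hyperplane_compact_closed[of C H] unfolding C_def
    by (metis closed_subspace convex_convex_hull subspace_imp_convex)
  from subspace_bounded_below_functional[OF \<open>subspace H\<close> ab(2)]
  have b: "b < 0" and aH: "\<forall>h\<in>H. inner a h = 0" by auto
  show ?thesis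
  proof (rule that[of "- a"])
    show "\<forall>e\<in>E. inner (- a) (reaction_vector y e) = 0"
      using aH unfolding H_def by (simp add: span_base)
    show "\<forall>k. x $ k \<noteq> 0 \<longrightarrow> (- a) $ k = 0"
    proof (intro allI impI)
      fix k
      assume "x $ k \<noteq> 0"
      then have "axis k 1 \<in> H" unfolding H_def by (intro span_base) blast
      then have "inner a (axis k 1) = 0" using aH by blast
      then show "(- a) $ k = 0" by (simp add: inner_axis)
    qed
    show "\<forall>k. x $ k = 0 \<longrightarrow> (- a) $ k > 0"
    proof (intro allI impI)
      fix k
      assume "x $ k = 0"
      then have "axis k 1 \<in> C" unfolding C_def Z_def by (simp add: hull_inc)
      then show "(- a) $ k > 0" using ab(1) b by (fastforce simp: inner_axis)
    qed
  qed
qed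

lemma log_extension_orthogonal:
  obtains w where "\<forall>e\<in>E. inner w (reaction_vector y e) = 0"
    and "\<forall>k. x $ k \<noteq> 0 \<longrightarrow> w $ k = ln (x $ k)"
proof -
  define l where "l = (\<chi> k. ln (x $ k))" \<comment> \<open>junk \<open>ln 0 = 0\<close> where \<open>x\<close> vanishes, absorbed by \<open>A\<close>\<close>
  define W where "W = {w :: real ^ 's. \<forall>e\<in>E. inner w (reaction_vector y e) = 0}"
  define A where "A = (\<lambda>k. axis k (1::real)) ` {k. x $ k = 0}"
  obtain p z where p: "p \<in> span (W \<union> A)" and z: "\<And>w. w \<in> span (W \<union> A) \<Longrightarrow> orthogonal z w"
    and "l = p + z"
    using orthogonal_subspace_decomp_exists by blast
  have "z \<in> span (reaction_vector y ` E)"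
    using z unfolding W_def
    by (intro in_span_if_orthogonal_to_annihilator) (auto simp: orthogonal_def intro: span_base)
  moreover have z_zero: "\<forall>k. x $ k = 0 \<longrightarrow> z $ k = 0"
  proof (intro allI impI)
    fix k
    assume "x $ k = 0"
    then have "axis k 1 \<in> span (W \<union> A)" unfolding A_def by (intro span_base) blast
    then have "inner z (axis k 1) = 0" using z by (simp add: orthogonal_def)
    then show "z $ k = 0" by (simp add: inner_axis)
  qed
  ultimately have "inner l z = 0" using span_log_orthogonal unfolding l_def by blast
  moreover have "inner p z = 0" using z[OF p] by (simp add: orthogonal_def inner_commute)
  ultimately have "z = 0" using \<open>l = p + z\<close> by (simp add: inner_add_left)
  with p \<open>l = p + z\<close> have "l \<in> span (W \<union> A)" by simp
  then obtain w a where wa: "l = w + a" "w \<in> span W" "a \<in> span A"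
    unfolding span_Un by blast
  have "subspace W" unfolding W_def subspace_def by (auto simp: inner_add_left)
  with wa(2) have "w \<in> W" by (simp only: span_eq_iff[THEN iffD2])
  moreover have "w $ k = ln (x $ k)" if "x $ k \<noteq> 0" for k
  proof -
    have "a $ k = 0" using span_axis_vanishes[OF wa(3)[unfolded A_def]] that by simp
    moreover have "l $ k = w $ k + a $ k" using wa(1) by simp
    ultimately show ?thesis unfolding l_def by simp
  qed
  ultimately show ?thesis using that unfolding W_def by blast
qed

lemma in_closure_positive_part: "x \<in> closure (event_variety E y \<inter> {x. \<forall>k. x $ k > 0})"
proof -
  obtain c where c: "\<forall>e\<in>E. inner c (reaction_vector y e) = 0" "\<forall>k. x $ k \<noteq> 0 \<longrightarrow> c $ k = 0"
    "\<forall>k. x $ k = 0 \<longrightarrow> c $ k > 0"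
    using positive_orthogonal_direction by blast
  obtain w where w: "\<forall>e\<in>E. inner w (reaction_vector y e) = 0" "\<forall>k. x $ k \<noteq> 0 \<longrightarrow> w $ k = ln (x $ k)"
    using log_extension_orthogonal by blast
  define z where "z n = (\<chi> k. exp ((w - real n *\<^sub>R c) $ k))" for n :: nat
  have "z n \<in> event_variety E y \<inter> {x. \<forall>k. x $ k > 0}" for n
  proof -
    have "\<forall>e\<in>E. inner (w - real n *\<^sub>R c) (reaction_vector y e) = 0"
      using c(1) w(1) by (simp add: inner_diff_left)
    then have "z n \<in> event_variety E y" unfolding z_def by (rule exp_vector_in_event_variety)
    moreover have "\<forall>k. z n $ k > 0" unfolding z_def by simp
    ultimately show ?thesis by blast
  qed
  moreover have "z \<longlonglongrightarrow> (\<chi> k. x $ k)"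
    unfolding z_def
  proof (rule tendsto_vec_lambda)
    fix k
    show "(\<lambda>n. exp ((w - real n *\<^sub>R c) $ k)) \<longlonglongrightarrow> x $ k"
    proof (cases "x $ k = 0")
      case True
      then show ?thesis using exp_minus_linear_tendsto_zero[of "c $ k" "w $ k"] c(3) by simp
    next
      case False
      with nonneg have "x $ k > 0" by (simp add: order_less_le)
      with False c(2) w(2) show ?thesis by simp
    qed
  qed
  ultimately show ?thesis unfolding closure_sequential vec_lambda_eta by blast
qed

end

theorem lemma4p8:
  fixes n :: nat and E :: "(nat \<times> nat) set" and y :: "nat \<Rightarrow> ('s::finite \<Rightarrow> nat)"
  assumes "is_CRN n E y"
    and "weakly_reversible n E"
    and "\<not> catalytic n E y"
  shows "event_variety E y \<inter> {x. \<forall>k. x $ k \<ge> 0}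
           \<subseteq> closure (event_variety E y \<inter> {x. \<forall>k. x $ k > 0})"
proof
  fix x
  assume x: "x \<in> event_variety E y \<inter> {x. \<forall>k. x $ k \<ge> 0}"
  have "finite E"
    using assms(1) unfolding is_CRN_def by (meson finite_SigmaI finite_atLeastAtMost finite_subset)
  moreover have "gcd_cancellative E y"
    using assms(2,3) unfolding catalytic_def gcd_cancellative_def by blast
  ultimately interpret nonneg_event_point E y x
    using x by unfold_locales auto
  show "x \<in> closure (event_variety E y \<inter> {x. \<forall>k. x $ k > 0})"
    by (rule in_closure_positive_part)
qed

end
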